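(* Let $H$ be the space of continuous $1$-periodic real functions with mean zero, and let $\Phi:H\to[0,\infty)$ be the functional defined below. Then $\Phi$ is bounded and continuous with respect to the $L^\infty$ norm; in particular, for all $\tilde q,\tilde q_1,\tilde q_2\in H$, \[ |\Phi(\tilde q)|\le\|\tilde q\|_{L^\infty},\qquad |\Phi(\tilde q_1)-\Phi(\tilde q_2)|\le\|\tilde q_1-\tilde q_2\|_{L^\infty}. \]
   Context: For $\tilde q\in H$, let $\psi>0$ be the positive $1$-periodic ground state eigenfunction of $-\frac{d^2}{dx^2}+\tilde q$ with periodic boundary conditions and $\tilde p=\psi'/\psi$; then $\tilde p$ is $1$-periodic, $\int_0^1\tilde p=0$, and $\tilde q=\tilde p'+\tilde p^2-\int_0^1\tilde p^2$. Define $\Phi(\tilde q)=\int_0^1\tilde p(x)^2\,dx$. *)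

theory Defs
  imports "HOL-Analysis.Analysis"
begin

definition periodic1 :: "(real \<Rightarrow> real) \<Rightarrow> bool" where
  "periodic1 f \<longleftrightarrow> (\<forall>x. f (x + 1) = f x)"

definition H :: "(real \<Rightarrow> real) set" where
  "H = {q. continuous_on UNIV q \<and> periodic1 q \<and> integral {0..1} q = 0}"

definition periodic_eigenfun :: "(real \<Rightarrow> real) \<Rightarrow> real \<Rightarrow> (real \<Rightarrow> real) \<Rightarrow> bool" where
  "periodic_eigenfun q lam phi \<longleftrightarrow>
     (\<forall>x. phi differentiable at x) \<and> (\<forall>x. deriv phi differentiable at x) \<and>
     periodic1 phi \<and>
     (\<forall>x. - deriv (deriv phi) x + q x * phi x = lam * phi x)"

definition periodic_eigenvalue :: "(real \<Rightarrow> real) \<Rightarrow> real \<Rightarrow> bool" where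
  "periodic_eigenvalue q lam \<longleftrightarrow> (\<exists>phi. (\<exists>x. phi x \<noteq> 0) \<and> periodic_eigenfun q lam phi)"

definition ground_state :: "(real \<Rightarrow> real) \<Rightarrow> (real \<Rightarrow> real) \<Rightarrow> bool" where
  "ground_state q psi \<longleftrightarrow>
     (\<exists>lam. periodic_eigenfun q lam psi \<and> (\<forall>mu. periodic_eigenvalue q mu \<longrightarrow> lam \<le> mu)) \<and>
     (\<forall>x. psi x > 0)"

text \<open>Phi(q) = int_0^1 p^2 with p = psi'/psi (independent of the scaling of psi).\<close>
definition Phi :: "(real \<Rightarrow> real) \<Rightarrow> real" where
  "Phi q = (let psi = (SOME psi. ground_state q psi)
            in integral {0..1} (\<lambda>x. (deriv psi x / psi x)^2))"

text \<open>L-infinity norm (sup norm; equals the essential sup for continuous functions).\<close>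
definition Linf :: "(real \<Rightarrow> real) \<Rightarrow> real" where
  "Linf f = (SUP x\<in>UNIV. \<bar>f x\<bar>)"

end

(*
  For the positive ground state psi of -y'' + q y = lam y, the logarithmic derivative
  p = psi'/psi solves the Riccati equation p' = q - lam - p^2; integrating over a period, where
  q has mean zero, gives Phi q = -lam. By Picone's identity the Rayleigh quotient of every
  periodic phi is at least lam, so lam lies below every periodic eigenvalue of any other
  potential q2, up to sup (q - q2). Comparing q1 and q2 in both directions gives the Lipschitz
  bound; comparing with the zero potential, and testing with phi = 1, gives 0 <= -lam <= sup |q|.

  As Phi is defined by choosing a ground state, the ground state has to be constructed. It is
  the limit of the power iteration of the positive resolvent K of -d^2/dx^2 + q + const, which
  is obtained from the periodic Green function of -d^2/dx^2 + a^2 by a contraction argument;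
  a Harnack inequality for K makes the iteration converge geometrically.
*)
theory Submission
  imports Defs "HOL-Library.Periodic_Fun"
begin

section \<open>Continuous 1-periodic functions\<close>

definition cont_periodic :: "(real \<Rightarrow> real) \<Rightarrow> bool" where
  "cont_periodic f \<longleftrightarrow> continuous_on UNIV f \<and> periodic1 f"

lemma periodic1_minus_one: "periodic1 f \<Longrightarrow> f (x - 1) = f x"
  unfolding periodic1_def by (metis diff_add_cancel)

lemma periodic1_range: assumes "periodic1 f" shows "range f = f ` {0..1}"
proof -
  interpret periodic_fun_simple' f
    using assms by unfold_locales (simp add: periodic1_def)
  have "f x \<in> f ` {0..1}" for x
  proof
    show "f x = f (frac x)" using minus_of_int[of x "\<lfloor>x\<rfloor>"] by (simp add: frac_def)
    show "frac x \<in> {0..1}" using frac_lt_1[of x] by (simp add: frac_ge_0)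
  qed
  then show ?thesis by auto
qed

lemma cont_periodic_bounded: assumes "cont_periodic f" shows "bounded (range f)"
proof -
  have "compact (f ` {0..1})"
    using assms by (auto simp: cont_periodic_def intro: compact_continuous_image continuous_on_subset)
  then show ?thesis
    using assms periodic1_range by (auto simp: cont_periodic_def compact_imp_bounded)
qed

lemma cont_periodic_abs_bound:
  assumes "cont_periodic f" obtains B where "\<And>x. \<bar>f x\<bar> \<le> B"
  using cont_periodic_bounded[OF assms] by (auto simp: bounded_real)

lemma abs_le_Linf: assumes "cont_periodic f" shows "\<bar>f x\<bar> \<le> Linf f"
proof -
  have "bdd_above (range (\<lambda>x. \<bar>f x\<bar>))"
    using cont_periodic_bounded[OF assms] by (auto simp: bounded_real bdd_above_def)
  then show ?thesis unfolding Linf_def by (rule cSUP_upper[rotated]) simp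
qed

lemma continuous_on_cont_periodic: "cont_periodic f \<Longrightarrow> continuous_on UNIV f"
  by (simp add: cont_periodic_def)

lemma cont_periodic_const [intro]: "cont_periodic (\<lambda>_. c)"
  by (simp add: cont_periodic_def periodic1_def)

lemma cont_periodic_add [intro]:
  "cont_periodic f \<Longrightarrow> cont_periodic g \<Longrightarrow> cont_periodic (\<lambda>x. f x + g x)"
  by (simp add: cont_periodic_def periodic1_def continuous_on_add)

lemma cont_periodic_diff [intro]:
  "cont_periodic f \<Longrightarrow> cont_periodic g \<Longrightarrow> cont_periodic (\<lambda>x. f x - g x)"
  by (simp add: cont_periodic_def periodic1_def continuous_on_diff)

lemma cont_periodic_mult [intro]:
  "cont_periodic f \<Longrightarrow> cont_periodic g \<Longrightarrow> cont_periodic (\<lambda>x. f x * g x)"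
  by (simp add: cont_periodic_def periodic1_def continuous_on_mult)

lemma cont_periodic_divide [intro]:
  "cont_periodic f \<Longrightarrow> cont_periodic g \<Longrightarrow> (\<And>x. g x \<noteq> 0) \<Longrightarrow> cont_periodic (\<lambda>x. f x / g x)"
  by (simp add: cont_periodic_def periodic1_def continuous_on_divide)

lemma continuous_on_UNIV_integrable:
  "continuous_on UNIV f \<Longrightarrow> (f :: real \<Rightarrow> real) integrable_on {a..b}"
  by (rule integrable_continuous_interval) (rule continuous_on_subset, auto)

lemma continuous_on_UNIV_of_derivative:
  "(\<And>x. (f has_real_derivative f' x) (at x)) \<Longrightarrow> continuous_on UNIV f"
  by (meson DERIV_isCont continuous_at_imp_continuous_on)

lemma integral_linear_combination:
  fixes f g :: "real \<Rightarrow> real"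
  assumes "f integrable_on S" "g integrable_on S"
  shows "integral S (\<lambda>x. c1 * f x + c2 * g x) = c1 * integral S f + c2 * integral S g"
  using integrable_on_cmult_left[OF assms(1), of c1] integrable_on_cmult_left[OF assms(2), of c2]
  by (simp add: integral_add)

lemma has_real_derivative_integral_window:
  assumes "continuous_on UNIV h"
  shows "((\<lambda>x. integral {x-1..x} h) has_real_derivative h x - h (x - 1)) (at x)"
proof -
  define I where "I y = integral {x-2..y} h" for y
  have "(I has_real_derivative h y) (at y)" if "x - 2 < y" for y
  proof -
    have "(I has_real_derivative h y) (at y within {x-2..y+1})"
      unfolding I_def using that continuous_on_subset[OF assms]
      by (intro integral_has_real_derivative) auto
    then show ?thesis using that by (simp add: at_within_Icc_at)
  qed
  moreover have "((\<lambda>y. I (y - 1)) has_real_derivative h (x - 1)) (at x)"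
  proof -
    have "((\<lambda>y. y - 1) has_real_derivative 1) (at x)" by (auto intro!: derivative_eq_intros)
    from DERIV_chain2[OF calculation[of "x - 1"] this] show ?thesis by simp
  qed
  ultimately have "((\<lambda>y. I y - I (y - 1)) has_real_derivative h x - h (x - 1)) (at x)"
    by (intro DERIV_diff) auto
  then show ?thesis
  proof (rule has_field_derivative_transform_within_open[where S = "{x-1<..}"])
    fix y :: real assume "y \<in> {x-1<..}"
    then have "integral {x-2..y-1} h + integral {y-1..y} h = integral {x-2..y} h"
      by (intro Henstock_Kurzweil_Integration.integral_combine continuous_on_UNIV_integrable assms) auto
    then show "I y - I (y - 1) = integral {y-1..y} h" by (simp add: I_def)
  qed auto
qed

lemma integral_window_periodic:
  assumes "cont_periodic h" shows "integral {x-1..x} h = integral {0..1} h"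
proof -
  have "((\<lambda>x. integral {x-1..x} h) has_real_derivative 0) (at x)" for x
    using has_real_derivative_integral_window[of h x] assms
    by (simp add: cont_periodic_def periodic1_minus_one)
  then have "\<forall>x. ((\<lambda>x. integral {x-1..x} h) has_real_derivative 0) (at x)" by blast
  from DERIV_isconst_all[OF this, of x 1] show ?thesis by simp
qed

lemma integral_deriv_periodic_eq_0:
  assumes "periodic1 F" "\<And>x. (F has_real_derivative F' x) (at x)"
  shows "integral {0..1} F' = 0"
proof -
  have "(F' has_integral (F 1 - F 0)) {0..1}"
    using assms(2) by (intro fundamental_theorem_of_calculus)
      (auto simp: has_real_derivative_iff_has_vector_derivative[symmetric] intro: has_field_derivative_at_within)
  moreover have "F 1 = F 0" using assms(1) unfolding periodic1_def by (metis add_0)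
  ultimately show ?thesis by (simp add: integral_unique)
qed

lemma periodic1_deriv:
  assumes "periodic1 f" "\<And>x. (f has_real_derivative f' x) (at x)"
  shows "periodic1 f'"
  unfolding periodic1_def
proof
  fix x
  have "((\<lambda>y. f (y + 1)) has_real_derivative f' (x + 1)) (at x)"
  proof -
    have "((\<lambda>y. y + 1) has_real_derivative 1) (at x)" by (auto intro!: derivative_eq_intros)
    from DERIV_chain2[OF assms(2) this] show ?thesis by simp
  qed
  moreover have "(\<lambda>y. f (y + 1)) = f" using assms(1) by (simp add: periodic1_def)
  ultimately show "f' (x + 1) = f' x" using assms(2) DERIV_unique by metis
qed

lemma integral_pos_of_nonneg:
  fixes f :: "real \<Rightarrow> real"
  assumes "continuous_on {0..1} f" "\<And>x. x \<in> {0..1} \<Longrightarrow> 0 \<le> f x" "y \<in> {0..1}" "f y \<noteq> 0"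
  shows "integral {0..1} f > 0"
proof -
  have "integral {0..1} f \<noteq> 0" using integral_eq_0_iff[where f = f and a = 0 and b = 1] assms by auto
  moreover have "integral {0..1} f \<ge> 0"
    using assms(1,2) by (intro integral_nonneg integrable_continuous_interval) auto
  ultimately show ?thesis by linarith
qed

lemma integral_square_pos:
  assumes "cont_periodic f" "f x0 \<noteq> 0"
  shows "integral {0..1} (\<lambda>x. f x * f x) > 0"
proof -
  obtain y where "y \<in> {0..1}" "f y \<noteq> 0"
    using assms periodic1_range[of f] by (force simp: cont_periodic_def)
  moreover have "continuous_on {0..1} (\<lambda>x. f x * f x)"
    using assms(1) by (auto simp: cont_periodic_def intro: continuous_on_mult continuous_on_subset)
  ultimately show ?thesis by (intro integral_pos_of_nonneg) auto
qed

section \<open>Convolution over one period and the periodic Green function\<close>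

definition window_conv :: "(real \<Rightarrow> real) \<Rightarrow> (real \<Rightarrow> real) \<Rightarrow> real \<Rightarrow> real" where
  "window_conv k f x = integral {x-1..x} (\<lambda>s. k (x - s) * f s)"

lemma window_integrand_integrable:
  fixes k f :: "real \<Rightarrow> real"
  assumes "continuous_on UNIV k" "continuous_on UNIV f"
  shows "(\<lambda>s. k (x - s) * f s) integrable_on {a..b}"
proof -
  have k: "continuous_on UNIV (\<lambda>s. k (x - s))"
    by (rule continuous_on_compose2[OF assms(1)]) (auto intro: continuous_intros)
  show ?thesis using continuous_on_mult[OF k assms(2)] by (rule continuous_on_UNIV_integrable)
qed

lemma window_conv_periodic:
  assumes "periodic1 f" shows "window_conv k f (x + 1) = window_conv k f x"
  using integral_shift_real_ivl[of x 1 "x + 1" "\<lambda>s. k (x + 1 - s) * f s"] assms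
  by (simp add: window_conv_def periodic1_def)

lemma window_conv_kernel_combination:
  assumes "continuous_on UNIV k1" "continuous_on UNIV k2" "continuous_on UNIV f"
  shows "window_conv (\<lambda>t. c1 * k1 t + c2 * k2 t) f x = c1 * window_conv k1 f x + c2 * window_conv k2 f x"
  using window_integrand_integrable[OF assms(1,3), of x "x-1" x]
    window_integrand_integrable[OF assms(2,3), of x "x-1" x]
  by (simp add: window_conv_def distrib_right mult.assoc integral_linear_combination)

lemma window_conv_linear_combination:
  assumes "continuous_on UNIV k" "continuous_on UNIV f" "continuous_on UNIV g"
  shows "window_conv k (\<lambda>s. c1 * f s + c2 * g s) x = c1 * window_conv k f x + c2 * window_conv k g x"
  using window_integrand_integrable[OF assms(1,2), of x "x-1" x]
    window_integrand_integrable[OF assms(1,3), of x "x-1" x]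
  by (simp add: window_conv_def distrib_left mult.left_commute integral_linear_combination)

lemma window_conv_mono:
  assumes "continuous_on UNIV k" "\<And>t. 0 \<le> t \<Longrightarrow> t \<le> 1 \<Longrightarrow> 0 \<le> k t"
    and "continuous_on UNIV f" "continuous_on UNIV g" "\<And>s. f s \<le> g s"
  shows "window_conv k f x \<le> window_conv k g x"
  unfolding window_conv_def
  by (intro integral_le window_integrand_integrable assms(1,3,4) mult_left_mono assms(5)) (auto intro: assms(2))

lemma window_conv_integral_bounds:
  assumes "continuous_on UNIV k" "\<And>t. 0 \<le> t \<Longrightarrow> t \<le> 1 \<Longrightarrow> m \<le> k t \<and> k t \<le> M"
    and "cont_periodic f" "\<And>s. 0 \<le> f s"
  shows "m * integral {0..1} f \<le> window_conv k f x" "window_conv k f x \<le> M * integral {0..1} f"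
proof -
  have f: "continuous_on UNIV f" using assms(3) by (simp add: cont_periodic_def)
  have int: "(\<lambda>s. c * f s) integrable_on {x-1..x}" for c
    by (intro continuous_on_UNIV_integrable continuous_intros f)
  have "m * integral {x-1..x} f \<le> window_conv k f x"
    unfolding window_conv_def integral_mult_right[symmetric]
    by (intro integral_le int window_integrand_integrable assms(1) f mult_right_mono assms(4))
      (use assms(2) in auto)
  moreover have "window_conv k f x \<le> M * integral {x-1..x} f"
    unfolding window_conv_def integral_mult_right[symmetric]
    by (intro integral_le int window_integrand_integrable assms(1) f mult_right_mono assms(4))
      (use assms(2) in auto)
  ultimately show "m * integral {0..1} f \<le> window_conv k f x" "window_conv k f x \<le> M * integral {0..1} f"
    using integral_window_periodic[OF assms(3)] by simp_all
qed

lemma has_real_derivative_window_conv_exp: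
  assumes "cont_periodic f"
  shows "(window_conv (\<lambda>t. exp (b * t)) f has_real_derivative
           b * window_conv (\<lambda>t. exp (b * t)) f x + (1 - exp b) * f x) (at x)"
proof -
  define J where "J y = integral {y-1..y} (\<lambda>s. exp (- (b * s)) * f s)" for y
  have f: "continuous_on UNIV f" "periodic1 f" using assms by (auto simp: cont_periodic_def)
  have conv: "window_conv (\<lambda>t. exp (b * t)) f = (\<lambda>y. exp (b * y) * J y)"
    by (simp add: fun_eq_iff window_conv_def J_def right_diff_distrib exp_diff exp_minus
        divide_inverse mult.assoc flip: integral_mult_right)
  have "(J has_real_derivative exp (- (b * x)) * f x - exp (- (b * (x - 1))) * f (x - 1)) (at x)"
    unfolding J_def by (intro has_real_derivative_integral_window continuous_intros f)
  moreover have "exp (- (b * (x - 1))) * f (x - 1) = exp (- (b * x)) * exp b * f x"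
    using f(2) by (simp add: periodic1_minus_one right_diff_distrib flip: exp_add)
  ultimately have "(J has_real_derivative exp (- (b * x)) * f x * (1 - exp b)) (at x)"
    by (simp add: algebra_simps)
  then have "((\<lambda>y. exp (b * y) * J y) has_real_derivative
               b * exp (b * x) * J x + exp (b * x) * (exp (- (b * x)) * f x * (1 - exp b))) (at x)"
    by (auto intro!: derivative_eq_intros)
  moreover have "b * exp (b * x) * J x + exp (b * x) * (exp (- (b * x)) * f x * (1 - exp b))
      = b * (exp (b * x) * J x) + (1 - exp b) * f x"
    by (simp add: exp_minus field_simps)
  ultimately show ?thesis unfolding conv by simp
qed

text \<open>The 1-periodic Green's function of \<open>-d\<^sup>2/dx\<^sup>2 + a\<^sup>2\<close>, i.e.
  \<open>cosh (a (t - 1/2)) / (2 a sinh (a/2))\<close> for \<open>0 \<le> t \<le> 1\<close>.\<close>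
definition green_kernel :: "real \<Rightarrow> real \<Rightarrow> real" where
  "green_kernel a t = (exp (a * t) + exp (a * (1 - t))) / (2 * a * (exp a - 1))"

definition green :: "real \<Rightarrow> (real \<Rightarrow> real) \<Rightarrow> real \<Rightarrow> real" where
  "green a = window_conv (green_kernel a)"

lemma continuous_green_kernel: "continuous_on UNIV (green_kernel a)"
  unfolding green_kernel_def divide_inverse by (intro continuous_intros)

lemma green_kernel_bounds:
  assumes "a > 0" "0 \<le> t" "t \<le> 1"
  shows "1 / (a * (exp a - 1)) \<le> green_kernel a t \<and> green_kernel a t \<le> exp a / (a * (exp a - 1))"
proof -
  define D where "D = 2 * a * (exp a - 1)"
  have D: "0 < D" using assms by (simp add: D_def)
  have "1 \<le> exp (a * t)" "exp (a * t) \<le> exp a" "1 \<le> exp (a * (1 - t))" "exp (a * (1 - t)) \<le> exp a"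
    using assms by (auto simp: mult_le_cancel_left1)
  then have "2 \<le> exp (a * t) + exp (a * (1 - t))" "exp (a * t) + exp (a * (1 - t)) \<le> 2 * exp a"
    by linarith+
  then have "2 / D \<le> (exp (a * t) + exp (a * (1 - t))) / D"
    "(exp (a * t) + exp (a * (1 - t))) / D \<le> 2 * exp a / D"
    using D by (auto intro!: divide_right_mono)
  then show ?thesis by (simp add: green_kernel_def D_def)
qed

lemma green_kernel_nonneg: "a > 0 \<Longrightarrow> 0 \<le> green_kernel a t"
  by (simp add: green_kernel_def add_nonneg_nonneg)

lemma green_eq_exp_windows:
  assumes "cont_periodic f"
  shows "green a f x = (window_conv (\<lambda>t. exp (a * t)) f x
    + exp a * window_conv (\<lambda>t. exp ((- a) * t)) f x) / (2 * a * (exp a - 1))"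
proof -
  define c where "c = 1 / (2 * a * (exp a - 1))"
  have kernel: "green_kernel a = (\<lambda>t. c * exp (a * t) + (c * exp a) * exp ((- a) * t))"
    by (simp add: fun_eq_iff green_kernel_def c_def right_diff_distrib exp_diff exp_minus
        divide_inverse algebra_simps)
  have exp_cont: "continuous_on UNIV (\<lambda>t. exp (b * t))" for b :: real by (intro continuous_intros)
  have "green a f x = c * window_conv (\<lambda>t. exp (a * t)) f x
      + c * exp a * window_conv (\<lambda>t. exp ((- a) * t)) f x"
    unfolding green_def kernel
    by (rule window_conv_kernel_combination[OF exp_cont exp_cont]) (use assms in \<open>simp add: cont_periodic_def\<close>)
  then show ?thesis by (simp add: c_def add_divide_distrib)
qed

lemma green_second_derivative:
  assumes "a > 0" "cont_periodic f"
  obtains u' where "\<And>x. (green a f has_real_derivative u' x) (at x)"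
    and "\<And>x. (u' has_real_derivative a\<^sup>2 * green a f x - f x) (at x)"
proof -
  define c where "c = 1 / (2 * a * (exp a - 1))"
  define Ep where "Ep = window_conv (\<lambda>t. exp (a * t)) f"
  define Em where "Em = window_conv (\<lambda>t. exp ((- a) * t)) f"
  have c: "2 * a * c * (exp a - 1) = 1" using assms(1) by (simp add: c_def)
  have green: "green a f = (\<lambda>x. c * Ep x + c * exp a * Em x)"
    by (simp add: fun_eq_iff green_eq_exp_windows[OF assms(2)] c_def Ep_def Em_def add_divide_distrib)
  have dEp: "(Ep has_real_derivative a * Ep x + (1 - exp a) * f x) (at x)" for x
    unfolding Ep_def by (rule has_real_derivative_window_conv_exp[OF assms(2)])
  have dEm: "(Em has_real_derivative (- a) * Em x + (1 - exp (- a)) * f x) (at x)" for x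
    unfolding Em_def by (rule has_real_derivative_window_conv_exp[OF assms(2)])
  define u' where "u' x = a * c * Ep x - a * c * exp a * Em x" for x
  show ?thesis
  proof
    show "(green a f has_real_derivative u' x) (at x)" for x
      unfolding green u'_def
      by (auto intro!: derivative_eq_intros dEp dEm simp: exp_minus field_simps)
    show "(u' has_real_derivative a\<^sup>2 * green a f x - f x) (at x)" for x
    proof -
      have "(u' has_real_derivative a * c * (a * Ep x + (1 - exp a) * f x)
              - a * c * exp a * ((- a) * Em x + (1 - exp (- a)) * f x)) (at x)"
        unfolding u'_def[abs_def] by (auto intro!: derivative_eq_intros dEp dEm)
      moreover have "exp a * exp (- a) = 1" by (simp flip: exp_add)
      then have "a * c * (a * Ep x + (1 - exp a) * f x)
              - a * c * exp a * ((- a) * Em x + (1 - exp (- a)) * f x)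
            = a\<^sup>2 * green a f x - (2 * a * c * (exp a - 1)) * f x"
        by (simp add: green algebra_simps power2_eq_square)
      ultimately show ?thesis using c by simp
    qed
  qed
qed

lemma cont_periodic_green:
  assumes "a > 0" "cont_periodic f" shows "cont_periodic (green a f)"
proof -
  obtain u' where "\<And>x. (green a f has_real_derivative u' x) (at x)"
    using green_second_derivative[OF assms] by blast
  then have "continuous_on UNIV (green a f)" by (rule continuous_on_UNIV_of_derivative)
  moreover have "periodic1 (green a f)"
    using assms(2) by (simp add: periodic1_def green_def window_conv_periodic cont_periodic_def)
  ultimately show ?thesis by (simp add: cont_periodic_def)
qed

lemma green_linear_combination:
  "continuous_on UNIV f \<Longrightarrow> continuous_on UNIV g \<Longrightarrow>
    green a (\<lambda>s. c1 * f s + c2 * g s) x = c1 * green a f x + c2 * green a g x"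
  unfolding green_def by (rule window_conv_linear_combination[OF continuous_green_kernel])

lemma green_mono:
  "a > 0 \<Longrightarrow> continuous_on UNIV f \<Longrightarrow> continuous_on UNIV g \<Longrightarrow> (\<And>s. f s \<le> g s) \<Longrightarrow>
    green a f x \<le> green a g x"
  unfolding green_def by (rule window_conv_mono[OF continuous_green_kernel green_kernel_nonneg])

lemma green_const: assumes "a > 0" shows "green a (\<lambda>_. c) x = c / a\<^sup>2"
proof -
  have "exp a - 1 > 0" using assms by simp
  define C where "C = c / (2 * a\<^sup>2 * (exp a - 1))"
  define F where "F s = C * (exp (a * (1 - (x - s))) - exp (a * (x - s)))" for s
  have "((\<lambda>s. green_kernel a (x - s) * c) has_integral F x - F (x - 1)) {x-1..x}"
  proof (rule fundamental_theorem_of_calculus)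
    fix s
    have "(F has_real_derivative C * (a * exp (a * (1 - (x - s))) + a * exp (a * (x - s)))) (at s)"
      unfolding F_def by (auto intro!: derivative_eq_intros simp: algebra_simps)
    moreover have "C * (a * exp (a * (1 - (x - s))) + a * exp (a * (x - s))) = green_kernel a (x - s) * c"
      using assms \<open>exp a - 1 > 0\<close> by (simp add: green_kernel_def C_def field_simps power2_eq_square)
    ultimately show "(F has_vector_derivative green_kernel a (x - s) * c) (at s within {x-1..x})"
      by (simp add: has_real_derivative_iff_has_vector_derivative[symmetric] has_field_derivative_at_within)
  qed simp
  moreover have "F x - F (x - 1) = 2 * C * (exp a - 1)" by (simp add: F_def algebra_simps)
  then have "F x - F (x - 1) = c / a\<^sup>2" using \<open>exp a - 1 > 0\<close> by (simp add: C_def)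
  ultimately have "((\<lambda>s. green_kernel a (x - s) * c) has_integral c / a\<^sup>2) {x-1..x}" by simp
  then show ?thesis unfolding green_def window_conv_def by (rule integral_unique)
qed

lemma green_abs_le:
  assumes "a > 0" "continuous_on UNIV f" "\<And>s. \<bar>f s\<bar> \<le> B"
  shows "\<bar>green a f x\<bar> \<le> B / a\<^sup>2"
proof -
  have "f s \<le> B" "- B \<le> f s" for s using assms(3)[of s] by auto
  then have "green a f x \<le> green a (\<lambda>_. B) x" "green a (\<lambda>_. - B) x \<le> green a f x"
    using assms(1,2) by (auto intro!: green_mono)
  then show ?thesis using green_const[OF assms(1)] by (simp add: abs_le_iff)
qed

lemma green_integral_bounds:
  assumes "a > 0" "cont_periodic f" "\<And>s. 0 \<le> f s"
  shows "integral {0..1} f / (a * (exp a - 1)) \<le> green a f x"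
    and "green a f x \<le> exp a * integral {0..1} f / (a * (exp a - 1))"
  using window_conv_integral_bounds[OF continuous_green_kernel green_kernel_bounds[OF assms(1)] assms(2,3)]
  unfolding green_def by (simp_all add: field_simps)

lemma green_harnack:
  assumes "a > 0" "cont_periodic f" "\<And>s. 0 \<le> f s"
  shows "green a f x \<le> exp a * green a f y"
proof -
  have "green a f x \<le> exp a * (integral {0..1} f / (a * (exp a - 1)))"
    using green_integral_bounds(2)[OF assms] by simp
  also have "\<dots> \<le> exp a * green a f y"
    using green_integral_bounds(1)[OF assms, of y] by (intro mult_left_mono) auto
  finally show ?thesis .
qed

lemma green_pos:
  assumes "a > 0" "cont_periodic f" "\<And>s. 0 < f s"
  shows "0 < green a f x"
proof -
  have "f 0 \<noteq> 0" "\<And>s. 0 \<le> f s" using assms(3) by (metis less_irrefl, metis less_imp_le)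
  then have "0 < integral {0..1} f"
    using assms(2) by (intro integral_pos_of_nonneg[of f 0])
      (auto simp: cont_periodic_def intro: continuous_on_subset)
  then have "0 < integral {0..1} f / (a * (exp a - 1))" using assms(1) by simp
  also have "\<dots> \<le> green a f x" using green_integral_bounds(1)[OF assms(1,2)] assms(3) less_imp_le by blast
  finally show ?thesis .
qed

section \<open>Geometric convergence and contractions\<close>

lemma tendsto_of_geometric_bound:
  fixes s :: "nat \<Rightarrow> real"
  assumes "\<And>n. \<bar>s n - L\<bar> \<le> C * \<theta> ^ n" "0 \<le> \<theta>" "\<theta> < 1"
  shows "s \<longlonglongrightarrow> L"
proof -
  have "(\<lambda>n. C * \<theta> ^ n) \<longlonglongrightarrow> 0"
    using tendsto_mult[OF tendsto_const LIMSEQ_power_zero[of \<theta>], of C] assms(2,3) by simp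
  moreover have "\<forall>\<^sub>F n in sequentially. norm (s n - L) \<le> C * \<theta> ^ n"
    using assms(1) by (intro always_eventually allI) simp
  ultimately have "(\<lambda>n. s n - L) \<longlonglongrightarrow> 0" by (rule Lim_null_comparison[rotated])
  then show ?thesis by (rule LIM_zero_cancel)
qed

lemma abs_le_geometric_imp_eq_0:
  fixes d :: real
  assumes "0 \<le> \<theta>" "\<theta> < 1" "\<And>n. \<bar>d\<bar> \<le> C * \<theta> ^ n"
  shows "d = 0"
  using tendsto_of_geometric_bound[of "\<lambda>_. d" 0 C \<theta>] assms by (simp add: LIMSEQ_const_iff)

lemma geometric_increments_limit:
  fixes s :: "nat \<Rightarrow> real"
  assumes inc: "\<And>n. \<bar>s (Suc n) - s n\<bar> \<le> B * \<theta> ^ n" and \<theta>: "0 \<le> \<theta>" "\<theta> < 1"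
  shows "s \<longlonglongrightarrow> lim s" and "\<bar>lim s - s n\<bar> \<le> B * \<theta> ^ n / (1 - \<theta>)"
proof -
  define d where "d k = s (Suc k) - s k" for k
  have summable_geom: "summable (\<lambda>k. c * \<theta> ^ k)" for c
    using \<theta> by (intro summable_mult summable_geometric) simp
  have "summable d"
    by (rule summable_comparison_test[OF _ summable_geom[of B]]) (use inc in \<open>simp add: d_def\<close>)
  have partial: "s n = s 0 + (\<Sum>k<n. d k)" for n
    by (simp add: d_def sum_lessThan_telescope)
  have "(\<lambda>n. s 0 + (\<Sum>k<n. d k)) \<longlonglongrightarrow> s 0 + suminf d"
    by (intro tendsto_add tendsto_const summable_LIMSEQ \<open>summable d\<close>)
  then have "s \<longlonglongrightarrow> s 0 + suminf d" by (simp only: partial[symmetric])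
  then have lim: "lim s = s 0 + suminf d" by (rule limI)
  then show "s \<longlonglongrightarrow> lim s" using \<open>s \<longlonglongrightarrow> s 0 + suminf d\<close> by simp
  have "lim s - s n = (\<Sum>k. d (k + n))"
    using suminf_minus_initial_segment[OF \<open>summable d\<close>, of n] by (simp add: lim partial[of n])
  also have "\<bar>\<dots>\<bar> \<le> (\<Sum>k. B * \<theta> ^ n * \<theta> ^ k)"
  proof (rule norm_suminf_le[where f = "\<lambda>k. d (k + n)", unfolded real_norm_def])
    show "\<bar>d (k + n)\<bar> \<le> B * \<theta> ^ n * \<theta> ^ k" for k
      using inc[of "k + n"] by (simp add: d_def power_add mult_ac)
  qed (rule summable_geom)
  also have "\<dots> = B * \<theta> ^ n / (1 - \<theta>)"
    using \<theta> by (simp add: suminf_mult summable_geometric suminf_geometric)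
  finally show "\<bar>lim s - s n\<bar> \<le> B * \<theta> ^ n / (1 - \<theta>)" .
qed

lemma continuous_on_geometric_limit:
  fixes F :: "nat \<Rightarrow> 'a::topological_space \<Rightarrow> real"
  assumes "\<And>n. continuous_on UNIV (F n)"
    and inc: "\<And>n x. \<bar>F (Suc n) x - F n x\<bar> \<le> B * \<theta> ^ n" and \<theta>: "0 \<le> \<theta>" "\<theta> < 1"
  shows "continuous_on UNIV (\<lambda>x. lim (\<lambda>n. F n x))"
proof (rule uniform_limit_theorem)
  show "uniform_limit UNIV F (\<lambda>x. lim (\<lambda>n. F n x)) sequentially"
  proof (rule uniform_limitI)
    fix e :: real assume "0 < e"
    have "(\<lambda>n. B * \<theta> ^ n / (1 - \<theta>)) \<longlonglongrightarrow> B * 0 / (1 - \<theta>)"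
      using \<theta> by (intro tendsto_intros) auto
    then have "\<forall>\<^sub>F n in sequentially. B * \<theta> ^ n / (1 - \<theta>) < e"
      using \<open>0 < e\<close> by (simp add: order_tendstoD(2))
    moreover have "\<bar>lim (\<lambda>n. F n x) - F n x\<bar> \<le> B * \<theta> ^ n / (1 - \<theta>)" for n x
      using geometric_increments_limit(2)[of "\<lambda>n. F n x", OF inc \<theta>] .
    ultimately show "\<forall>\<^sub>F n in sequentially. \<forall>x\<in>UNIV. dist (F n x) (lim (\<lambda>n. F n x)) < e"
      by (elim eventually_mono) (auto simp: dist_real_def abs_minus_commute intro: le_less_trans)
  qed
qed (use assms(1) in auto)

locale periodic_contraction =
  fixes T :: "(real \<Rightarrow> real) \<Rightarrow> real \<Rightarrow> real" and \<theta> :: real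
  assumes cont_periodic_T: "cont_periodic u \<Longrightarrow> cont_periodic (T u)"
    and contraction: "cont_periodic u \<Longrightarrow> cont_periodic w \<Longrightarrow> (\<And>y. \<bar>u y - w y\<bar> \<le> B) \<Longrightarrow>
      \<bar>T u x - T w x\<bar> \<le> \<theta> * B"
    and \<theta>_bounds: "0 \<le> \<theta>" "\<theta> < 1"
begin

definition fixed_point :: "real \<Rightarrow> real" where
  "fixed_point x = lim (\<lambda>n. (T ^^ n) (\<lambda>_. 0) x)"

lemma cont_periodic_iterate: "cont_periodic ((T ^^ n) (\<lambda>_. 0))"
  by (induction n) (simp_all add: cont_periodic_T cont_periodic_const)

lemma iterate_increments:
  obtains B where "\<And>n x. \<bar>(T ^^ Suc n) (\<lambda>_. 0) x - (T ^^ n) (\<lambda>_. 0) x\<bar> \<le> B * \<theta> ^ n"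
proof -
  obtain B where B: "\<And>x. \<bar>(T ^^ 1) (\<lambda>_. 0) x - (T ^^ 0) (\<lambda>_. 0) x\<bar> \<le> B"
    using cont_periodic_abs_bound[OF cont_periodic_diff[OF cont_periodic_iterate cont_periodic_iterate]]
    by blast
  have "\<bar>(T ^^ Suc n) (\<lambda>_. 0) x - (T ^^ n) (\<lambda>_. 0) x\<bar> \<le> B * \<theta> ^ n" for n x
  proof (induction n arbitrary: x)
    case 0 show ?case using B by simp
  next
    case (Suc n)
    from contraction[OF cont_periodic_iterate cont_periodic_iterate Suc, of x] show ?case
      by (simp add: mult_ac)
  qed
  then show ?thesis by (rule that)
qed

lemma iterate_tendsto: "(\<lambda>n. (T ^^ n) (\<lambda>_. 0) x) \<longlonglongrightarrow> fixed_point x"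
proof -
  obtain B where "\<And>n x. \<bar>(T ^^ Suc n) (\<lambda>_. 0) x - (T ^^ n) (\<lambda>_. 0) x\<bar> \<le> B * \<theta> ^ n"
    by (rule iterate_increments) blast
  from geometric_increments_limit(1)[of "\<lambda>n. (T ^^ n) (\<lambda>_. 0) x", OF this \<theta>_bounds]
  show ?thesis by (simp add: fixed_point_def)
qed

lemma cont_periodic_fixed_point: "cont_periodic fixed_point"
proof -
  obtain B where inc: "\<And>n x. \<bar>(T ^^ Suc n) (\<lambda>_. 0) x - (T ^^ n) (\<lambda>_. 0) x\<bar> \<le> B * \<theta> ^ n"
    by (rule iterate_increments) blast
  have "continuous_on UNIV fixed_point"
    unfolding fixed_point_def[abs_def] using cont_periodic_iterate
    by (intro continuous_on_geometric_limit[OF _ inc \<theta>_bounds] continuous_on_cont_periodic)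
  moreover have "periodic1 fixed_point"
    using cont_periodic_iterate by (simp add: fixed_point_def periodic1_def cont_periodic_def)
  ultimately show ?thesis by (simp add: cont_periodic_def)
qed

lemma fixed_point_eq: "T fixed_point = fixed_point"
proof
  fix x
  obtain B where inc: "\<And>n x. \<bar>(T ^^ Suc n) (\<lambda>_. 0) x - (T ^^ n) (\<lambda>_. 0) x\<bar> \<le> B * \<theta> ^ n"
    by (rule iterate_increments) blast
  have "\<bar>(T ^^ n) (\<lambda>_. 0) y - fixed_point y\<bar> \<le> B * \<theta> ^ n / (1 - \<theta>)" for n y
    using geometric_increments_limit(2)[of "\<lambda>n. (T ^^ n) (\<lambda>_. 0) y", OF inc \<theta>_bounds]
    by (simp add: fixed_point_def abs_minus_commute)
  from contraction[OF cont_periodic_iterate cont_periodic_fixed_point this]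
  have "\<bar>(T ^^ Suc n) (\<lambda>_. 0) x - T fixed_point x\<bar> \<le> (\<theta> * B / (1 - \<theta>)) * \<theta> ^ n" for n
    by (simp add: mult_ac)
  then have "(\<lambda>n. (T ^^ Suc n) (\<lambda>_. 0) x) \<longlonglongrightarrow> T fixed_point x"
    by (rule tendsto_of_geometric_bound[OF _ \<theta>_bounds])
  moreover have "(\<lambda>n. (T ^^ Suc n) (\<lambda>_. 0) x) \<longlonglongrightarrow> fixed_point x"
    by (rule LIMSEQ_Suc[OF iterate_tendsto])
  ultimately show "T fixed_point x = fixed_point x" by (rule LIMSEQ_unique)
qed

lemma fixed_point_unique:
  assumes "cont_periodic u" "T u = u" shows "u = fixed_point"
proof
  fix x
  obtain B where B: "\<And>y. \<bar>u y - fixed_point y\<bar> \<le> B"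
    using cont_periodic_abs_bound[OF cont_periodic_diff[OF assms(1) cont_periodic_fixed_point]] by blast
  have "\<bar>u y - fixed_point y\<bar> \<le> B * \<theta> ^ n" for n y
  proof (induction n arbitrary: y)
    case 0 show ?case using B by simp
  next
    case (Suc n)
    from contraction[OF assms(1) cont_periodic_fixed_point Suc, of y] show ?case
      by (simp add: assms(2) fixed_point_eq mult_ac)
  qed
  then have "u x - fixed_point x = 0" by (intro abs_le_geometric_imp_eq_0[OF \<theta>_bounds])
  then show "u x = fixed_point x" by simp
qed

end

section \<open>The resolvent of \<open>-d\<^sup>2/dx\<^sup>2 + q\<close>\<close>

locale bounded_potential =
  fixes q :: "real \<Rightarrow> real" and Q :: real
  assumes cont_periodic_q: "cont_periodic q" and abs_q_le: "\<And>x. \<bar>q x\<bar> \<le> Q"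
begin

text \<open>\<open>K f\<close> is the periodic solution \<open>u\<close> of \<open>-u'' + (q + Q + 1) u = f\<close>. Written as
  \<open>-u'' + \<omega>\<^sup>2 u = f + V u\<close> with \<open>\<omega>\<^sup>2 = 2 Q + 2\<close> and \<open>1 \<le> V \<le> 2 Q + 1\<close>, it is the fixed point
  of \<open>u \<mapsto> green \<omega> (f + V u)\<close>, a contraction with constant \<open>(2 Q + 1) / (2 Q + 2)\<close> that
  preserves positivity.\<close>

definition \<omega> :: real where "\<omega> = sqrt (2 * Q + 2)"

definition V :: "real \<Rightarrow> real" where "V x = Q + 1 - q x"

definition T :: "(real \<Rightarrow> real) \<Rightarrow> (real \<Rightarrow> real) \<Rightarrow> real \<Rightarrow> real" where
  "T f u = green \<omega> (\<lambda>x. f x + V x * u x)"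

definition K :: "(real \<Rightarrow> real) \<Rightarrow> real \<Rightarrow> real" where
  "K f = periodic_contraction.fixed_point (T f)"

lemma Q_nonneg: "0 \<le> Q"
  using abs_q_le[of 0] by linarith

lemma \<omega>_pos: "0 < \<omega>"
  using Q_nonneg by (simp add: \<omega>_def)

lemma \<omega>_squared: "\<omega>\<^sup>2 = 2 * Q + 2"
  using Q_nonneg by (simp add: \<omega>_def)

lemma V_bounds: "1 \<le> V x" "V x \<le> 2 * Q + 1"
  using abs_q_le[of x] by (auto simp: V_def abs_le_iff)

lemma cont_periodic_V: "cont_periodic V"
  using cont_periodic_q unfolding V_def by (intro cont_periodic_diff cont_periodic_const)

lemma cont_periodic_T: "cont_periodic f \<Longrightarrow> cont_periodic u \<Longrightarrow> cont_periodic (T f u)"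
  unfolding T_def using cont_periodic_V by (intro cont_periodic_green \<omega>_pos) auto

lemma T_contraction:
  assumes "cont_periodic f" "cont_periodic u" "cont_periodic w" "\<And>y. \<bar>u y - w y\<bar> \<le> B"
  shows "\<bar>T f u x - T f w x\<bar> \<le> (2 * Q + 1) / (2 * Q + 2) * B"
proof -
  have cont: "continuous_on UNIV (\<lambda>x. f x + V x * u x)" "continuous_on UNIV (\<lambda>x. f x + V x * w x)"
    using assms(1-3) cont_periodic_V by (auto intro!: continuous_on_cont_periodic)
  have "green \<omega> (\<lambda>s. V s * (u s - w s)) x
      = green \<omega> (\<lambda>s. 1 * (f s + V s * u s) + (- 1) * (f s + V s * w s)) x"
    by (rule arg_cong[where f = "\<lambda>h. green \<omega> h x"]) (simp add: fun_eq_iff algebra_simps)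
  also have "\<dots> = T f u x - T f w x"
    unfolding green_linear_combination[OF cont] T_def by simp
  finally have diff: "T f u x - T f w x = green \<omega> (\<lambda>s. V s * (u s - w s)) x" by simp
  have "\<bar>V s * (u s - w s)\<bar> \<le> (2 * Q + 1) * B" for s
    using V_bounds[of s] assms(4)[of s] by (simp add: abs_mult mult_mono)
  then have "\<bar>T f u x - T f w x\<bar> \<le> (2 * Q + 1) * B / \<omega>\<^sup>2"
    unfolding diff using assms(2,3) cont_periodic_V
    by (intro green_abs_le \<omega>_pos continuous_on_cont_periodic) auto
  then show ?thesis by (simp add: \<omega>_squared)
qed

lemma periodic_contraction_T:
  assumes "cont_periodic f" shows "periodic_contraction (T f) ((2 * Q + 1) / (2 * Q + 2))"
proof
  fix u w :: "real \<Rightarrow> real" and B x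
  show "cont_periodic u \<Longrightarrow> cont_periodic (T f u)" by (rule cont_periodic_T[OF assms])
  show "cont_periodic u \<Longrightarrow> cont_periodic w \<Longrightarrow> (\<And>y. \<bar>u y - w y\<bar> \<le> B) \<Longrightarrow>
      \<bar>T f u x - T f w x\<bar> \<le> (2 * Q + 1) / (2 * Q + 2) * B"
    by (rule T_contraction[OF assms])
qed (use Q_nonneg in auto)

lemma
  assumes "cont_periodic f"
  shows cont_periodic_K: "cont_periodic (K f)"
    and K_fixed_point: "T f (K f) = K f"
    and iterates_tendsto_K: "(\<lambda>n. (T f ^^ n) (\<lambda>_. 0) x) \<longlonglongrightarrow> K f x"
    and K_unique: "cont_periodic u \<Longrightarrow> T f u = u \<Longrightarrow> u = K f"
    and cont_periodic_T_iterate: "cont_periodic ((T f ^^ n) (\<lambda>_. 0))"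
proof -
  interpret periodic_contraction "T f" "(2 * Q + 1) / (2 * Q + 2)"
    by (rule periodic_contraction_T[OF assms])
  show "cont_periodic ((T f ^^ n) (\<lambda>_. 0))" by (rule cont_periodic_iterate)
  show "cont_periodic (K f)" "T f (K f) = K f" "(\<lambda>n. (T f ^^ n) (\<lambda>_. 0) x) \<longlonglongrightarrow> K f x"
    unfolding K_def by (fact cont_periodic_fixed_point fixed_point_eq iterate_tendsto)+
  show "cont_periodic u \<Longrightarrow> T f u = u \<Longrightarrow> u = K f"
    unfolding K_def by (rule fixed_point_unique)
qed

lemma cont_periodic_green_argument:
  "cont_periodic f \<Longrightarrow> cont_periodic (\<lambda>x. f x + V x * K f x)"
  by (intro cont_periodic_add cont_periodic_mult cont_periodic_V cont_periodic_K)

lemma K_linear_combination: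
  assumes "cont_periodic f" "cont_periodic g"
  shows "K (\<lambda>s. c1 * f s + c2 * g s) = (\<lambda>x. c1 * K f x + c2 * K g x)"
proof (rule K_unique[symmetric])
  show "cont_periodic (\<lambda>s. c1 * f s + c2 * g s)"
    by (intro cont_periodic_add cont_periodic_mult cont_periodic_const assms)
  show "cont_periodic (\<lambda>x. c1 * K f x + c2 * K g x)"
    by (intro cont_periodic_add cont_periodic_mult cont_periodic_const cont_periodic_K assms)
  have "T (\<lambda>s. c1 * f s + c2 * g s) (\<lambda>x. c1 * K f x + c2 * K g x) x = c1 * T f (K f) x + c2 * T g (K g) x" for x
    unfolding T_def green_linear_combination[OF continuous_on_cont_periodic[OF cont_periodic_green_argument[OF assms(1)]]
        continuous_on_cont_periodic[OF cont_periodic_green_argument[OF assms(2)]], symmetric]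
    by (simp add: algebra_simps)
  then show "T (\<lambda>s. c1 * f s + c2 * g s) (\<lambda>x. c1 * K f x + c2 * K g x) = (\<lambda>x. c1 * K f x + c2 * K g x)"
    by (simp add: fun_eq_iff K_fixed_point[OF assms(1)] K_fixed_point[OF assms(2)])
qed

lemma K_scale: "cont_periodic f \<Longrightarrow> K (\<lambda>s. c * f s) = (\<lambda>x. c * K f x)"
  using K_linear_combination[of f f c 0] by simp

lemma K_nonneg:
  assumes "cont_periodic f" "\<And>s. 0 \<le> f s"
  shows "0 \<le> K f x"
proof -
  have "0 \<le> (T f ^^ n) (\<lambda>_. 0) y" for n y
  proof (induction n arbitrary: y)
    case (Suc n)
    define u where "u = (T f ^^ n) (\<lambda>_. 0)"
    have "0 \<le> f s + V s * u s" for s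
      using assms(2)[of s] V_bounds(1)[of s] Suc[of s] unfolding u_def
      by (intro add_nonneg_nonneg mult_nonneg_nonneg) auto
    then have "green \<omega> (\<lambda>_. 0) y \<le> green \<omega> (\<lambda>x. f x + V x * u x) y"
      using assms(1) cont_periodic_T_iterate[OF assms(1), of n] cont_periodic_V unfolding u_def
      by (intro green_mono \<omega>_pos continuous_on_cont_periodic cont_periodic_add cont_periodic_mult) auto
    then have "0 \<le> T f u y" by (simp add: T_def green_const[OF \<omega>_pos])
    then show ?case by (simp add: u_def)
  qed simp
  then show ?thesis
    by (intro LIMSEQ_le_const[OF iterates_tendsto_K[OF assms(1)]]) auto
qed

lemma K_abs_le:
  assumes "cont_periodic f" "\<And>s. \<bar>f s\<bar> \<le> B"
  shows "\<bar>K f x\<bar> \<le> B"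
proof -
  have "\<bar>(T f ^^ n) (\<lambda>_. 0) y\<bar> \<le> B" for n y
  proof (induction n arbitrary: y)
    case 0 show ?case using assms(2)[of 0] by auto
  next
    case (Suc n)
    define u where "u = (T f ^^ n) (\<lambda>_. 0)"
    have "\<bar>f s + V s * u s\<bar> \<le> B + (2 * Q + 1) * B" for s
    proof -
      have "\<bar>V s * u s\<bar> \<le> (2 * Q + 1) * B"
        using V_bounds[of s] Suc[of s] by (simp add: u_def abs_mult mult_mono)
      then show ?thesis using abs_triangle_ineq[of "f s" "V s * u s"] assms(2)[of s] by linarith
    qed
    then have "\<bar>T f u y\<bar> \<le> (B + (2 * Q + 1) * B) / \<omega>\<^sup>2"
      unfolding T_def using assms(1) cont_periodic_T_iterate[OF assms(1), of n] cont_periodic_V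
      unfolding u_def by (intro green_abs_le \<omega>_pos continuous_on_cont_periodic cont_periodic_add cont_periodic_mult)
    moreover have "(B + (2 * Q + 1) * B) / \<omega>\<^sup>2 = B"
      using Q_nonneg by (simp add: \<omega>_squared field_simps)
    ultimately show ?case by (simp add: u_def)
  qed
  then show ?thesis
    by (intro LIMSEQ_le_const2[OF tendsto_rabs[OF iterates_tendsto_K[OF assms(1)]]]) auto
qed

lemma K_scaled_diff:
  assumes "cont_periodic f" "cont_periodic g"
  shows "K (\<lambda>s. c * g s - f s) x = c * K g x - K f x"
  using K_linear_combination[OF assms(2,1), of c "- 1"] by simp

lemma K_mono:
  assumes "cont_periodic f" "cont_periodic g" "\<And>s. f s \<le> g s"
  shows "K f x \<le> K g x"
proof -
  have "0 \<le> K (\<lambda>s. 1 * g s - f s) x" using assms by (intro K_nonneg) auto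
  then show ?thesis using K_scaled_diff[OF assms(1,2), of 1 x] by simp
qed

lemma K_eq_green:
  "cont_periodic f \<Longrightarrow> K f = green \<omega> (\<lambda>x. f x + V x * K f x)"
  using K_fixed_point by (simp add: T_def)

lemma K_harnack:
  assumes "cont_periodic f" "\<And>s. 0 \<le> f s"
  shows "K f x \<le> exp \<omega> * K f y"
proof -
  define h where "h = (\<lambda>x. f x + V x * K f x)"
  have "0 \<le> h s" for s
    using assms(2)[of s] V_bounds(1)[of s] K_nonneg[OF assms]
    unfolding h_def by (intro add_nonneg_nonneg mult_nonneg_nonneg) auto
  then have "green \<omega> h x \<le> exp \<omega> * green \<omega> h y"
    using cont_periodic_green_argument[OF assms(1)] by (intro green_harnack \<omega>_pos) (simp_all add: h_def)
  moreover have "K f = green \<omega> h" unfolding h_def by (rule K_eq_green[OF assms(1)])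
  ultimately show ?thesis by simp
qed

lemma K_pos:
  assumes "cont_periodic f" "\<And>s. 0 < f s"
  shows "0 < K f x"
proof -
  define h where "h = (\<lambda>x. f x + V x * K f x)"
  have "0 \<le> f s" for s using assms(2)[of s] by simp
  then have "0 \<le> K f s" for s using K_nonneg[OF assms(1)] by blast
  then have "0 < h s" for s
    using assms(2)[of s] V_bounds(1)[of s] unfolding h_def by (intro add_pos_nonneg mult_nonneg_nonneg) auto
  then have "0 < green \<omega> h x"
    using cont_periodic_green_argument[OF assms(1)] by (intro green_pos \<omega>_pos) (simp_all add: h_def)
  moreover have "K f = green \<omega> h" unfolding h_def by (rule K_eq_green[OF assms(1)])
  ultimately show ?thesis by simp
qed

lemma K_second_derivative:
  assumes "cont_periodic f"
  obtains u' where "\<And>x. (K f has_real_derivative u' x) (at x)"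
    and "\<And>x. (u' has_real_derivative (q x + Q + 1) * K f x - f x) (at x)"
proof -
  define h where "h = (\<lambda>x. f x + V x * K f x)"
  have K: "K f = green \<omega> h" unfolding h_def by (rule K_eq_green[OF assms])
  obtain u' where d1: "\<And>x. (green \<omega> h has_real_derivative u' x) (at x)"
    and d2: "\<And>x. (u' has_real_derivative \<omega>\<^sup>2 * green \<omega> h x - (f x + V x * K f x)) (at x)"
    by (rule green_second_derivative[OF \<omega>_pos cont_periodic_green_argument[OF assms], folded h_def]) blast
  have eq: "\<omega>\<^sup>2 * green \<omega> h x - (f x + V x * K f x) = (q x + Q + 1) * K f x - f x" for x
    unfolding K[symmetric] by (simp add: \<omega>_squared V_def algebra_simps)
  show ?thesis
  proof (rule that)
    show "(K f has_real_derivative u' x) (at x)" for x unfolding K by (rule d1)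
    show "(u' has_real_derivative (q x + Q + 1) * K f x - f x) (at x)" for x
      using d2[of x] unfolding eq .
  qed
qed

section \<open>Power iteration\<close>

definition \<epsilon> :: real where "\<epsilon> = 1 - exp (- (2 * \<omega>))"

lemma \<epsilon>_bounds: "0 \<le> \<epsilon>" "\<epsilon> < 1"
  using \<omega>_pos by (auto simp: \<epsilon>_def)

lemma K_ratio_bounds:
  assumes f: "cont_periodic f" and g: "cont_periodic g" "\<And>s. 0 < g s"
    and "\<And>s. a * g s \<le> f s" "\<And>s. f s \<le> b * g s"
  shows "a \<le> K f x / K g x" "K f x / K g x \<le> b"
proof -
  have "K (\<lambda>s. a * g s) x \<le> K f x" "K f x \<le> K (\<lambda>s. b * g s) x"
    using assms by (auto intro!: K_mono)
  then show "a \<le> K f x / K g x" "K f x / K g x \<le> b"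
    using K_pos[OF g, of x] by (simp_all add: K_scale[OF g(1)] le_divide_eq divide_le_eq)
qed

text \<open>Birkhoff's contraction of the Hilbert projective metric, in the elementary form
  needed here: the Harnack inequality for \<open>K\<close> shrinks the oscillation of \<open>K f / K g\<close> by the
  factor \<open>\<epsilon>\<close>.\<close>

lemma K_ratio_oscillation:
  assumes f: "cont_periodic f" and g: "cont_periodic g" "\<And>s. 0 < g s"
    and "\<And>s. a * g s \<le> f s" and upper: "\<And>s. f s \<le> b * g s"
  shows "K f x / K g x - K f y / K g y \<le> \<epsilon> * (b - a)"
proof -
  define R where "R = exp \<omega>"
  have R: "1 \<le> R" using \<omega>_pos by (simp add: R_def)
  have "R\<^sup>2 = exp (2 * \<omega>)" using exp_of_nat_mult[of 2 \<omega>] by (simp add: R_def)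
  then have \<epsilon>: "\<epsilon> = 1 - 1 / R\<^sup>2" by (simp add: \<epsilon>_def exp_minus divide_inverse)
  have Kg: "0 < K g z" for z by (rule K_pos[OF g])
  have hi: "0 \<le> b * K g z - K f z" for z
    using K_ratio_bounds(2)[OF assms, of z] Kg[of z] by (simp add: divide_le_eq)
  have hi_harnack: "b * K g y - K f y \<le> R * (b * K g x - K f x)"
    using K_harnack[of "\<lambda>s. b * g s - f s" y x] upper f g(1)
    by (simp add: R_def K_scaled_diff[OF f g(1)] cont_periodic_diff cont_periodic_mult cont_periodic_const)
  have g_harnack: "K g x \<le> R * K g y"
    unfolding R_def using g(2) by (intro K_harnack g(1) less_imp_le)
  define rx ry where "rx = K f x / K g x" and "ry = K f y / K g y"
  have "b - ry = (b * K g y - K f y) / K g y" using Kg[of y] by (simp add: ry_def field_simps)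
  also have "\<dots> \<le> R * (b * K g x - K f x) / K g y"
    using hi_harnack Kg[of y] by (simp add: divide_right_mono)
  also have "\<dots> \<le> R * (b * K g x - K f x) / (K g x / R)"
    using g_harnack R Kg[of x] Kg[of y] hi[of x] by (intro divide_left_mono) (auto simp: divide_le_eq mult.commute)
  also have "\<dots> = R\<^sup>2 * (b - rx)"
    using R Kg[of x] by (simp add: rx_def field_simps power2_eq_square)
  finally have "(b - ry) / R\<^sup>2 \<le> b - rx"
    using R by (simp add: divide_le_eq mult.commute)
  moreover have "\<epsilon> * (b - ry) = (b - ry) - (b - ry) / R\<^sup>2"
    using R by (simp add: \<epsilon> field_simps)
  ultimately have "rx - ry \<le> \<epsilon> * (b - ry)" by linarith
  also have "\<dots> \<le> \<epsilon> * (b - a)"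
    using K_ratio_bounds(1)[OF assms, of y] \<epsilon>_bounds by (intro mult_left_mono) (simp_all add: ry_def)
  finally show ?thesis by (simp add: rx_def ry_def)
qed

text \<open>The growth factors \<open>power_iter (n + 1) / power_iter n\<close> have oscillation
  \<open>O(\<epsilon>\<^sup>n)\<close>, so they converge to a constant, and the iterates normalised at \<open>0\<close> converge to a
  positive eigenfunction of \<open>K\<close>.\<close>

definition power_iter :: "nat \<Rightarrow> real \<Rightarrow> real" where "power_iter n = (K ^^ n) (\<lambda>_. 1)"

definition growth :: "nat \<Rightarrow> real \<Rightarrow> real" where "growth n x = power_iter (Suc n) x / power_iter n x"

definition growth_inf :: "nat \<Rightarrow> real" where "growth_inf n = (INF x. growth n x)"

definition growth_sup :: "nat \<Rightarrow> real" where "growth_sup n = (SUP x. growth n x)"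

lemma power_iter_Suc: "power_iter (Suc n) = K (power_iter n)"
  by (simp add: power_iter_def)

lemma cont_periodic_power_iter: "cont_periodic (power_iter n)"
  by (induction n) (simp_all add: power_iter_Suc cont_periodic_K, simp add: power_iter_def cont_periodic_const)

lemma power_iter_pos: "0 < power_iter n x"
  by (induction n arbitrary: x) (simp_all add: power_iter_Suc K_pos cont_periodic_power_iter, simp add: power_iter_def)

lemma power_iter_harnack: "power_iter n x \<le> exp \<omega> * power_iter n y"
proof (cases n)
  case 0 then show ?thesis using \<omega>_pos by (simp add: power_iter_def)
next
  case (Suc m)
  then show ?thesis
    using power_iter_pos[of m] by (simp add: power_iter_Suc K_harnack cont_periodic_power_iter less_imp_le)
qed

lemma cont_periodic_growth: "cont_periodic (growth n)"
  unfolding growth_def[abs_def]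
  by (intro cont_periodic_divide cont_periodic_power_iter) (simp add: power_iter_pos less_imp_neq[symmetric])

lemma growth_bdd: "bdd_below (range (growth n))" "bdd_above (range (growth n))"
  using cont_periodic_bounded[OF cont_periodic_growth] by (simp_all add: bounded_imp_bdd_below bounded_imp_bdd_above)

lemma growth_inf_le: "growth_inf n \<le> growth n x"
  unfolding growth_inf_def by (rule cINF_lower[OF growth_bdd(1)]) simp

lemma growth_le_sup: "growth n x \<le> growth_sup n"
  unfolding growth_sup_def by (rule cSUP_upper[OF _ growth_bdd(2)]) simp

lemma growth_Suc_bounds:
  "growth_inf n \<le> growth (Suc n) x" "growth (Suc n) x \<le> growth_sup n"
  "growth (Suc n) x - growth (Suc n) y \<le> \<epsilon> * (growth_sup n - growth_inf n)"
proof -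
  have "growth_inf n * power_iter n s \<le> power_iter (Suc n) s" "power_iter (Suc n) s \<le> growth_sup n * power_iter n s" for s
    using growth_inf_le[of n s] growth_le_sup[of n s] power_iter_pos[of n s]
    by (simp_all add: growth_def le_divide_eq divide_le_eq)
  from K_ratio_bounds[OF cont_periodic_power_iter cont_periodic_power_iter power_iter_pos this]
    K_ratio_oscillation[OF cont_periodic_power_iter cont_periodic_power_iter power_iter_pos this]
  show "growth_inf n \<le> growth (Suc n) x" "growth (Suc n) x \<le> growth_sup n"
    "growth (Suc n) x - growth (Suc n) y \<le> \<epsilon> * (growth_sup n - growth_inf n)"
    by (simp_all add: growth_def power_iter_Suc)
qed

lemma growth_inf_mono: "growth_inf 0 \<le> growth_inf n"
proof (induction n)
  case (Suc n)
  have "growth_inf n \<le> growth_inf (Suc n)"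
    unfolding growth_inf_def[of "Suc n"] by (rule cINF_greatest) (simp_all add: growth_Suc_bounds)
  with Suc show ?case by linarith
qed simp

lemma growth_inf_pos: "0 < growth_inf 0"
proof -
  have "power_iter 1 0 / exp \<omega> \<le> growth_inf 0"
    unfolding growth_inf_def
  proof (rule cINF_greatest)
    show "power_iter 1 0 / exp \<omega> \<le> growth 0 y" for y
      using power_iter_harnack[of 1 0 y] by (simp add: growth_def power_iter_def divide_le_eq mult.commute)
  qed simp
  moreover have "0 < power_iter 1 0 / exp \<omega>" using power_iter_pos by simp
  ultimately show ?thesis by linarith
qed

lemma growth_oscillation: "growth_sup n - growth_inf n \<le> (growth_sup 0 - growth_inf 0) * \<epsilon> ^ n"
proof (induction n)
  case (Suc n)
  have "growth (Suc n) x - \<epsilon> * (growth_sup n - growth_inf n) \<le> growth_inf (Suc n)" for x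
    unfolding growth_inf_def[of "Suc n"]
  proof (rule cINF_greatest)
    show "growth (Suc n) x - \<epsilon> * (growth_sup n - growth_inf n) \<le> growth (Suc n) y" for y
      using growth_Suc_bounds(3)[of n x y] by linarith
  qed simp
  then have "growth_sup (Suc n) \<le> growth_inf (Suc n) + \<epsilon> * (growth_sup n - growth_inf n)"
    unfolding growth_sup_def[of "Suc n"] by (intro cSUP_least) (auto simp: algebra_simps)
  then have "growth_sup (Suc n) - growth_inf (Suc n) \<le> \<epsilon> * (growth_sup n - growth_inf n)"
    by simp
  also have "\<dots> \<le> \<epsilon> * ((growth_sup 0 - growth_inf 0) * \<epsilon> ^ n)"
    using Suc \<epsilon>_bounds(1) by (rule mult_left_mono)
  finally show ?case by (simp add: mult_ac)
qed simp

definition normalized_iter :: "nat \<Rightarrow> real \<Rightarrow> real" where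
  "normalized_iter n x = power_iter n x / power_iter n 0"

lemma growth_ge_growth_inf_0: "growth_inf 0 \<le> growth n x"
  using growth_inf_mono[of n] growth_inf_le[of n x] by linarith

lemma growth_oscillation_abs:
  "\<bar>growth n x - growth n y\<bar> \<le> (growth_sup 0 - growth_inf 0) * \<epsilon> ^ n"
  using growth_inf_le[of n x] growth_le_sup[of n x] growth_inf_le[of n y] growth_le_sup[of n y]
    growth_oscillation[of n] by linarith

lemma growth_increment:
  "\<bar>growth (Suc n) x - growth n x\<bar> \<le> (growth_sup 0 - growth_inf 0) * \<epsilon> ^ n"
  using growth_inf_le[of n x] growth_le_sup[of n x] growth_Suc_bounds(1,2)[of n x]
    growth_oscillation[of n] by linarith

lemma cont_periodic_normalized_iter: "cont_periodic (normalized_iter n)"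
  unfolding normalized_iter_def[abs_def]
  by (intro cont_periodic_divide cont_periodic_power_iter cont_periodic_const) (simp add: power_iter_pos less_imp_neq[symmetric])

lemma normalized_iter_pos: "0 < normalized_iter n x"
  by (simp add: normalized_iter_def power_iter_pos)

lemma normalized_iter_le: "normalized_iter n x \<le> exp \<omega>"
  using power_iter_harnack[of n x 0] power_iter_pos[of n 0] by (simp add: normalized_iter_def divide_le_eq)

lemma normalized_iter_0: "normalized_iter n 0 = 1"
  using power_iter_pos[of n 0] by (simp add: normalized_iter_def)

lemma normalized_iter_Suc: "normalized_iter (Suc n) x = normalized_iter n x * (growth n x / growth n 0)"
  using power_iter_pos[of n x] power_iter_pos[of n 0] power_iter_pos[of "Suc n" 0]
  by (simp add: normalized_iter_def growth_def field_simps)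

lemma K_normalized_iter: "K (normalized_iter n) x = growth n 0 * normalized_iter (Suc n) x"
proof -
  have "normalized_iter n = (\<lambda>s. (1 / power_iter n 0) * power_iter n s)"
    by (simp add: fun_eq_iff normalized_iter_def)
  then have "K (normalized_iter n) x = (1 / power_iter n 0) * power_iter (Suc n) x"
    by (simp only: K_scale[OF cont_periodic_power_iter] power_iter_Suc)
  then show ?thesis
    using power_iter_pos[of n 0] power_iter_pos[of "Suc n" 0] by (simp add: normalized_iter_def growth_def)
qed

definition normalized_iter_rate :: real where
  "normalized_iter_rate = exp \<omega> * (growth_sup 0 - growth_inf 0) / growth_inf 0"

lemma normalized_iter_increment:
  "\<bar>normalized_iter (Suc n) x - normalized_iter n x\<bar> \<le> normalized_iter_rate * \<epsilon> ^ n"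
proof -
  define D where "D = (growth_sup 0 - growth_inf 0) * \<epsilon> ^ n"
  have g0: "growth_inf 0 \<le> growth n 0" by (rule growth_ge_growth_inf_0)
  have "normalized_iter (Suc n) x - normalized_iter n x
      = normalized_iter n x * (growth n x - growth n 0) / growth n 0"
    unfolding normalized_iter_Suc using g0 growth_inf_pos by (simp add: field_simps)
  then have "\<bar>normalized_iter (Suc n) x - normalized_iter n x\<bar>
      = normalized_iter n x * \<bar>growth n x - growth n 0\<bar> / growth n 0"
    using normalized_iter_pos[of n x] g0 growth_inf_pos by (simp add: abs_mult)
  also have "\<dots> \<le> exp \<omega> * D / growth n 0"
    using normalized_iter_le[of n x] normalized_iter_pos[of n x] growth_oscillation_abs[of n x 0] g0 growth_inf_pos
    by (intro divide_right_mono mult_mono) (auto simp: D_def)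
  also have "\<dots> \<le> exp \<omega> * D / growth_inf 0"
    using g0 growth_inf_pos growth_oscillation_abs[of n 0 0]
    by (intro divide_left_mono) (auto simp: D_def)
  finally show ?thesis by (simp add: D_def normalized_iter_rate_def)
qed

definition limit_eigenfun :: "real \<Rightarrow> real" where
  "limit_eigenfun x = lim (\<lambda>n. normalized_iter n x)"

definition limit_growth :: real where
  "limit_growth = lim (\<lambda>n. growth n 0)"

lemma normalized_iter_tendsto: "(\<lambda>n. normalized_iter n x) \<longlonglongrightarrow> limit_eigenfun x"
  and limit_eigenfun_approx:
    "\<bar>limit_eigenfun x - normalized_iter n x\<bar> \<le> normalized_iter_rate / (1 - \<epsilon>) * \<epsilon> ^ n"
  using geometric_increments_limit[of "\<lambda>n. normalized_iter n x", OF normalized_iter_increment \<epsilon>_bounds]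
  by (simp_all add: limit_eigenfun_def)

lemma growth_tendsto: "(\<lambda>n. growth n 0) \<longlonglongrightarrow> limit_growth"
  using geometric_increments_limit(1)[of "\<lambda>n. growth n 0", OF growth_increment \<epsilon>_bounds]
  by (simp add: limit_growth_def)

lemma limit_growth_pos: "0 < limit_growth"
proof -
  have "growth_inf 0 \<le> limit_growth"
    using growth_ge_growth_inf_0 by (intro LIMSEQ_le_const[OF growth_tendsto]) auto
  then show ?thesis using growth_inf_pos by linarith
qed

lemma cont_periodic_limit_eigenfun: "cont_periodic limit_eigenfun"
proof -
  have "continuous_on UNIV limit_eigenfun"
    unfolding limit_eigenfun_def[abs_def] using cont_periodic_normalized_iter
    by (intro continuous_on_geometric_limit[OF _ normalized_iter_increment \<epsilon>_bounds] continuous_on_cont_periodic)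
  moreover have "periodic1 limit_eigenfun"
    using cont_periodic_normalized_iter by (simp add: limit_eigenfun_def periodic1_def cont_periodic_def)
  ultimately show ?thesis by (simp add: cont_periodic_def)
qed

lemma limit_eigenfun_0: "limit_eigenfun 0 = 1"
  using normalized_iter_tendsto[of 0] by (simp add: normalized_iter_0 LIMSEQ_const_iff)

lemma limit_eigenfun_nonneg: "0 \<le> limit_eigenfun x"
  using normalized_iter_pos by (intro LIMSEQ_le_const[OF normalized_iter_tendsto]) (auto intro: less_imp_le)

lemma K_limit_eigenfun: "K limit_eigenfun x = limit_growth * limit_eigenfun x"
proof -
  have "\<bar>K (normalized_iter n) x - K limit_eigenfun x\<bar> \<le> normalized_iter_rate / (1 - \<epsilon>) * \<epsilon> ^ n" for n
  proof -
    have "K (normalized_iter n) x - K limit_eigenfun x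
        = K (\<lambda>s. 1 * normalized_iter n s + (- 1) * limit_eigenfun s) x"
      unfolding K_linear_combination[OF cont_periodic_normalized_iter cont_periodic_limit_eigenfun] by simp
    also have "\<bar>\<dots>\<bar> \<le> normalized_iter_rate / (1 - \<epsilon>) * \<epsilon> ^ n"
      using limit_eigenfun_approx
      by (intro K_abs_le cont_periodic_add cont_periodic_mult cont_periodic_const
          cont_periodic_normalized_iter cont_periodic_limit_eigenfun) (simp add: abs_minus_commute)
    finally show ?thesis .
  qed
  then have "(\<lambda>n. K (normalized_iter n) x) \<longlonglongrightarrow> K limit_eigenfun x"
    by (rule tendsto_of_geometric_bound[OF _ \<epsilon>_bounds])
  moreover have "(\<lambda>n. K (normalized_iter n) x) \<longlonglongrightarrow> limit_growth * limit_eigenfun x"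
    unfolding K_normalized_iter by (intro tendsto_mult growth_tendsto LIMSEQ_Suc[OF normalized_iter_tendsto])
  ultimately show ?thesis by (rule LIMSEQ_unique)
qed

lemma limit_eigenfun_pos: "0 < limit_eigenfun x"
proof -
  have "limit_growth \<le> exp \<omega> * (limit_growth * limit_eigenfun x)"
    using K_harnack[OF cont_periodic_limit_eigenfun limit_eigenfun_nonneg, of 0 x]
    by (simp add: K_limit_eigenfun limit_eigenfun_0)
  then have "limit_eigenfun x \<noteq> 0" using limit_growth_pos by auto
  then show ?thesis using limit_eigenfun_nonneg[of x] by linarith
qed

lemma periodic_eigenfun_of_K_eigenfun:
  assumes cp: "cont_periodic \<Phi>" and \<mu>: "0 < \<mu>" and eigen: "\<And>x. K \<Phi> x = \<mu> * \<Phi> x"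
  shows "periodic_eigenfun q (1 / \<mu> - Q - 1) \<Phi>"
proof -
  obtain u' where d1: "\<And>x. (K \<Phi> has_real_derivative u' x) (at x)"
    and d2: "\<And>x. (u' has_real_derivative (q x + Q + 1) * K \<Phi> x - \<Phi> x) (at x)"
    by (rule K_second_derivative[OF cp]) blast
  have \<Phi>: "\<Phi> = (\<lambda>x. K \<Phi> x / \<mu>)" using eigen \<mu> by (simp add: fun_eq_iff)
  have d\<Phi>: "(\<Phi> has_real_derivative u' x / \<mu>) (at x)" for x
    by (subst \<Phi>) (intro DERIV_cdivide d1)
  then have deriv\<Phi>: "deriv \<Phi> = (\<lambda>x. u' x / \<mu>)" by (simp add: fun_eq_iff DERIV_imp_deriv)
  have dd\<Phi>: "(deriv \<Phi> has_real_derivative ((q x + Q + 1) * K \<Phi> x - \<Phi> x) / \<mu>) (at x)" for x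
    unfolding deriv\<Phi> by (intro DERIV_cdivide d2)
  show ?thesis
    unfolding periodic_eigenfun_def
  proof (intro conjI allI)
    show "\<Phi> differentiable at x" "deriv \<Phi> differentiable at x" for x
      using d\<Phi> dd\<Phi> by (auto simp: real_differentiable_def)
    show "periodic1 \<Phi>" using cp by (simp add: cont_periodic_def)
    show "- deriv (deriv \<Phi>) x + q x * \<Phi> x = (1 / \<mu> - Q - 1) * \<Phi> x" for x
      using DERIV_imp_deriv[OF dd\<Phi>] \<mu> by (simp add: eigen field_simps)
  qed
qed

lemma positive_periodic_eigenfun:
  obtains \<psi> lam where "\<And>x. 0 < \<psi> x" "periodic_eigenfun q lam \<psi>"
  using limit_eigenfun_pos periodic_eigenfun_of_K_eigenfun[OF cont_periodic_limit_eigenfun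
      limit_growth_pos K_limit_eigenfun] by blast

end

section \<open>Comparison of periodic eigenvalues\<close>

lemma periodic_eigenfunD:
  assumes "periodic_eigenfun q lam \<psi>"
  shows "(\<psi> has_real_derivative deriv \<psi> x) (at x)"
    and "(deriv \<psi> has_real_derivative (q x - lam) * \<psi> x) (at x)"
    and "cont_periodic \<psi>" and "cont_periodic (deriv \<psi>)"
proof -
  have d1: "(\<psi> has_real_derivative deriv \<psi> y) (at y)"
    and "(deriv \<psi> has_real_derivative deriv (deriv \<psi>) y) (at y)"
    and "deriv (deriv \<psi>) y = (q y - lam) * \<psi> y" for y
    using assms by (auto simp: periodic_eigenfun_def DERIV_deriv_iff_real_differentiable algebra_simps)
  then have d2: "(deriv \<psi> has_real_derivative (q y - lam) * \<psi> y) (at y)" for y by simp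
  show "(\<psi> has_real_derivative deriv \<psi> x) (at x)" "(deriv \<psi> has_real_derivative (q x - lam) * \<psi> x) (at x)"
    by (fact d1 d2)+
  have "periodic1 \<psi>" using assms by (simp add: periodic_eigenfun_def)
  moreover have "continuous_on UNIV \<psi>" "continuous_on UNIV (deriv \<psi>)"
    using continuous_on_UNIV_of_derivative[OF d1] continuous_on_UNIV_of_derivative[OF d2] .
  ultimately show "cont_periodic \<psi>" "cont_periodic (deriv \<psi>)"
    using periodic1_deriv[OF _ d1] by (simp_all add: cont_periodic_def)
qed

lemma log_derivative_riccati:
  assumes "periodic_eigenfun q lam \<psi>" "\<And>x. 0 < \<psi> x"
  shows "cont_periodic (\<lambda>x. deriv \<psi> x / \<psi> x)"
    and "((\<lambda>x. deriv \<psi> x / \<psi> x) has_real_derivative q x - lam - (deriv \<psi> x / \<psi> x)\<^sup>2) (at x)"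
proof -
  note eigen = periodic_eigenfunD[OF assms(1)]
  have nz: "\<psi> y \<noteq> 0" for y using assms(2)[of y] by simp
  show "cont_periodic (\<lambda>x. deriv \<psi> x / \<psi> x)"
    using eigen(3,4) nz by (intro cont_periodic_divide)
  have "((\<lambda>x. deriv \<psi> x / \<psi> x) has_real_derivative
      ((q x - lam) * \<psi> x * \<psi> x - deriv \<psi> x * deriv \<psi> x) / (\<psi> x * \<psi> x)) (at x)"
    using DERIV_divide[OF eigen(2) eigen(1) nz] by simp
  moreover have "((q x - lam) * \<psi> x * \<psi> x - deriv \<psi> x * deriv \<psi> x) / (\<psi> x * \<psi> x)
      = q x - lam - (deriv \<psi> x / \<psi> x)\<^sup>2"
    using nz[of x] by (simp add: field_simps power2_eq_square)
  ultimately show "((\<lambda>x. deriv \<psi> x / \<psi> x) has_real_derivative q x - lam - (deriv \<psi> x / \<psi> x)\<^sup>2) (at x)"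
    by simp
qed

text \<open>Picone's identity: with \<open>p = \<psi>'/\<psi>\<close>,
  \<open>\<phi>'\<^sup>2 + (q - lam) \<phi>\<^sup>2 = (\<phi>' - p \<phi>)\<^sup>2 + (p \<phi>\<^sup>2)'\<close>, and the last term integrates to zero.\<close>

lemma picone_inequality:
  assumes q: "continuous_on UNIV q" and eigen: "periodic_eigenfun q lam \<psi>" "\<And>x. 0 < \<psi> x"
    and \<phi>: "periodic1 \<phi>" "\<And>x. (\<phi> has_real_derivative \<phi>' x) (at x)" "continuous_on UNIV \<phi>'"
  shows "0 \<le> integral {0..1} (\<lambda>x. \<phi>' x * \<phi>' x + (q x - lam) * (\<phi> x * \<phi> x))"
proof -
  define p where "p x = deriv \<psi> x / \<psi> x" for x
  have p: "cont_periodic p" "\<And>x. (p has_real_derivative q x - lam - (p x)\<^sup>2) (at x)"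
    unfolding p_def[abs_def] using log_derivative_riccati[OF eigen] by simp_all
  have \<phi>_cont: "continuous_on UNIV \<phi>"
    using \<phi>(2) by (rule continuous_on_UNIV_of_derivative)
  define W' where "W' x = (q x - lam - (p x)\<^sup>2) * (\<phi> x * \<phi> x) + p x * (2 * \<phi>' x * \<phi> x)" for x
  define S where "S x = (\<phi>' x - p x * \<phi> x)\<^sup>2" for x
  have "((\<lambda>x. p x * (\<phi> x * \<phi> x)) has_real_derivative W' x) (at x)" for x
    unfolding W'_def by (auto intro!: derivative_eq_intros p(2) \<phi>(2) simp: algebra_simps)
  moreover have "periodic1 (\<lambda>x. p x * (\<phi> x * \<phi> x))"
    using p(1) \<phi>(1) by (simp add: cont_periodic_def periodic1_def)
  ultimately have W'_int: "integral {0..1} W' = 0"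
    by (intro integral_deriv_periodic_eq_0)
  have cont: "continuous_on UNIV S" "continuous_on UNIV W'"
    unfolding S_def[abs_def] W'_def[abs_def] using p(1) q \<phi>_cont \<phi>(3)
    by (auto simp: cont_periodic_def intro!: continuous_intros)
  have "integral {0..1} (\<lambda>x. \<phi>' x * \<phi>' x + (q x - lam) * (\<phi> x * \<phi> x)) = integral {0..1} (\<lambda>x. S x + W' x)"
    by (simp add: S_def W'_def algebra_simps power2_eq_square)
  also have "\<dots> = integral {0..1} S"
    using W'_int by (simp add: integral_add continuous_on_UNIV_integrable cont)
  also have "\<dots> \<ge> 0"
    by (intro integral_nonneg continuous_on_UNIV_integrable cont) (simp add: S_def)
  finally show ?thesis .
qed

lemma eigenfun_energy:
  assumes "periodic_eigenfun q mu \<phi>"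
  shows "integral {0..1} (\<lambda>x. deriv \<phi> x * deriv \<phi> x + (q x - mu) * (\<phi> x * \<phi> x)) = 0"
proof (rule integral_deriv_periodic_eq_0)
  note eigen = periodic_eigenfunD[OF assms]
  show "periodic1 (\<lambda>x. \<phi> x * deriv \<phi> x)"
    using eigen(3,4) by (simp add: cont_periodic_def periodic1_def)
  show "((\<lambda>x. \<phi> x * deriv \<phi> x) has_real_derivative
      deriv \<phi> x * deriv \<phi> x + (q x - mu) * (\<phi> x * \<phi> x)) (at x)" for x
    by (auto intro!: derivative_eq_intros eigen(1,2) simp: algebra_simps)
qed

lemma positive_eigenvalue_le:
  assumes q: "continuous_on UNIV q1" "continuous_on UNIV q2"
    and ground: "periodic_eigenfun q1 lam1 \<psi>" "\<And>x. 0 < \<psi> x"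
    and eigen: "periodic_eigenfun q2 lam2 \<phi>" "\<phi> y \<noteq> 0"
    and L: "\<And>x. q1 x - q2 x \<le> L"
  shows "lam1 \<le> lam2 + L"
proof -
  note \<phi> = periodic_eigenfunD[OF eigen(1)]
  have \<phi>_cont: "continuous_on UNIV \<phi>" "continuous_on UNIV (deriv \<phi>)" and periodic1_\<phi>: "periodic1 \<phi>"
    using \<phi>(3,4) by (simp_all add: cont_periodic_def)
  define E where "E q' lam' x = deriv \<phi> x * deriv \<phi> x + (q' x - lam') * (\<phi> x * \<phi> x)" for q' lam' x
  have int: "E q' lam' integrable_on {0..1}" if "continuous_on UNIV q'" for q' lam'
    unfolding E_def[abs_def] using that \<phi>_cont by (intro continuous_on_UNIV_integrable continuous_intros)
  have "0 \<le> integral {0..1} (E q1 lam1) - integral {0..1} (E q2 lam2)"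
    using picone_inequality[OF q(1) ground periodic1_\<phi> \<phi>(1) \<phi>_cont(2)] eigenfun_energy[OF eigen(1)]
    by (simp add: E_def[abs_def])
  also have "\<dots> = integral {0..1} (\<lambda>x. E q1 lam1 x - E q2 lam2 x)"
    by (rule integral_diff[OF int[OF q(1)] int[OF q(2)], symmetric])
  also have "\<dots> \<le> integral {0..1} (\<lambda>x. (L + lam2 - lam1) * (\<phi> x * \<phi> x))"
  proof (rule integral_le)
    show "(\<lambda>x. E q1 lam1 x - E q2 lam2 x) integrable_on {0..1}"
      by (intro integrable_diff int q)
    show "(\<lambda>x. (L + lam2 - lam1) * (\<phi> x * \<phi> x)) integrable_on {0..1}"
      using \<phi>_cont by (intro continuous_on_UNIV_integrable continuous_intros)
    show "E q1 lam1 x - E q2 lam2 x \<le> (L + lam2 - lam1) * (\<phi> x * \<phi> x)" for x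
      using mult_right_mono[OF L[of x], of "\<phi> x * \<phi> x"] by (simp add: E_def algebra_simps)
  qed
  also have "\<dots> = (L + lam2 - lam1) * integral {0..1} (\<lambda>x. \<phi> x * \<phi> x)"
    by simp
  finally have "0 \<le> (L + lam2 - lam1) * integral {0..1} (\<lambda>x. \<phi> x * \<phi> x)" .
  moreover have "0 < integral {0..1} (\<lambda>x. \<phi> x * \<phi> x)"
    by (rule integral_square_pos[OF \<phi>(3) eigen(2)])
  ultimately show ?thesis by (simp add: zero_le_mult_iff)
qed

lemma ground_state_exists:
  assumes "cont_periodic q" shows "\<exists>\<psi>. ground_state q \<psi>"
proof -
  obtain Q where "\<And>x. \<bar>q x\<bar> \<le> Q" using cont_periodic_abs_bound[OF assms] by blast
  then interpret bounded_potential q Q using assms by unfold_locales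
  obtain \<psi> lam where pos: "\<And>x. 0 < \<psi> x" and eigen: "periodic_eigenfun q lam \<psi>"
    by (rule positive_periodic_eigenfun) blast
  have "lam \<le> mu" if "periodic_eigenvalue q mu" for mu
    using that assms positive_eigenvalue_le[of q q lam \<psi> mu _ _ 0] eigen pos
    by (auto simp: periodic_eigenvalue_def cont_periodic_def)
  then show ?thesis using eigen pos unfolding ground_state_def by blast
qed

lemma mem_H_iff: "q \<in> H \<longleftrightarrow> cont_periodic q \<and> integral {0..1} q = 0"
  by (auto simp: H_def cont_periodic_def)

lemma Phi_eq_minus_eigenvalue:
  assumes "q \<in> H"
  obtains lam \<psi> where "Phi q = - lam" "\<And>x. 0 < \<psi> x" "periodic_eigenfun q lam \<psi>"
proof -
  have q: "cont_periodic q" "integral {0..1} q = 0" using assms by (simp_all add: mem_H_iff)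
  define \<psi> where "\<psi> = (SOME \<psi>. ground_state q \<psi>)"
  have "ground_state q \<psi>" unfolding \<psi>_def using ground_state_exists[OF q(1)] by (rule someI_ex)
  then obtain lam where eigen: "periodic_eigenfun q lam \<psi>" and pos: "\<And>x. 0 < \<psi> x"
    unfolding ground_state_def by blast
  define p where "p x = deriv \<psi> x / \<psi> x" for x
  have p: "cont_periodic p" "\<And>x. (p has_real_derivative q x - lam - (p x)\<^sup>2) (at x)"
    unfolding p_def[abs_def] using log_derivative_riccati[OF eigen pos] by simp_all
  have "0 = integral {0..1} (\<lambda>x. q x - lam - (p x)\<^sup>2)"
    by (rule integral_deriv_periodic_eq_0[symmetric]) (use p in \<open>auto simp: cont_periodic_def\<close>)
  also have "\<dots> = integral {0..1} q - lam - integral {0..1} (\<lambda>x. (p x)\<^sup>2)"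
    using p(1) q(1)
    by (simp add: integral_diff continuous_on_UNIV_integrable cont_periodic_def continuous_intros)
  finally have "integral {0..1} (\<lambda>x. (p x)\<^sup>2) = - lam" using q(2) by simp
  then have "Phi q = - lam" by (simp add: Phi_def \<psi>_def[symmetric] p_def)
  then show ?thesis using that pos eigen by blast
qed

lemma periodic_eigenfun_zero_potential: "periodic_eigenfun (\<lambda>_. 0) 0 (\<lambda>_. 1)"
  by (simp add: periodic_eigenfun_def periodic1_def)

lemma abs_Phi_le_Linf:
  assumes "q \<in> H" shows "\<bar>Phi q\<bar> \<le> Linf q"
proof -
  have q: "cont_periodic q" "integral {0..1} q = 0" using assms by (simp_all add: mem_H_iff)
  obtain lam \<psi> where Phi: "Phi q = - lam" and pos: "\<And>x. 0 < \<psi> x" and eigen: "periodic_eigenfun q lam \<psi>"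
    by (rule Phi_eq_minus_eigenvalue[OF assms]) blast
  have "0 \<le> integral {0..1} (\<lambda>x. 0 * 0 + (q x - lam) * (1 * 1))"
    using q(1) by (intro picone_inequality[OF _ eigen pos]) (auto simp: cont_periodic_def periodic1_def)
  then have "lam \<le> 0" using q by (simp add: integral_diff continuous_on_UNIV_integrable cont_periodic_def)
  moreover have "0 \<le> lam + Linf q"
    using q(1) abs_le_Linf[OF q(1)] pos[of 0]
    by (intro positive_eigenvalue_le[OF _ _ periodic_eigenfun_zero_potential _ eigen, where y = 0])
      (auto simp: cont_periodic_def abs_le_iff)
  ultimately show ?thesis by (simp add: Phi)
qed

lemma abs_Phi_diff_le_Linf:
  assumes "q1 \<in> H" "q2 \<in> H" shows "\<bar>Phi q1 - Phi q2\<bar> \<le> Linf (\<lambda>x. q1 x - q2 x)"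
proof -
  have "cont_periodic q1" "cont_periodic q2" using assms by (simp_all add: mem_H_iff)
  then have q: "continuous_on UNIV q1" "continuous_on UNIV q2" "cont_periodic (\<lambda>x. q1 x - q2 x)"
    by (simp_all add: cont_periodic_diff continuous_on_cont_periodic)
  obtain lam1 \<psi>1 where Phi1: "Phi q1 = - lam1" and pos1: "\<And>x. 0 < \<psi>1 x"
    and eigen1: "periodic_eigenfun q1 lam1 \<psi>1"
    by (rule Phi_eq_minus_eigenvalue[OF assms(1)]) blast
  obtain lam2 \<psi>2 where Phi2: "Phi q2 = - lam2" and pos2: "\<And>x. 0 < \<psi>2 x"
    and eigen2: "periodic_eigenfun q2 lam2 \<psi>2"
    by (rule Phi_eq_minus_eigenvalue[OF assms(2)]) blast
  have "q1 x - q2 x \<le> Linf (\<lambda>x. q1 x - q2 x)" "q2 x - q1 x \<le> Linf (\<lambda>x. q1 x - q2 x)" for x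
    using abs_le_Linf[OF q(3), of x] by (simp_all add: abs_le_iff)
  then have "lam1 \<le> lam2 + Linf (\<lambda>x. q1 x - q2 x)" "lam2 \<le> lam1 + Linf (\<lambda>x. q1 x - q2 x)"
    using pos1[of 0] pos2[of 0]
    by (intro positive_eigenvalue_le[OF q(1,2) eigen1 pos1 eigen2, where y = 0]
        positive_eigenvalue_le[OF q(2,1) eigen2 pos2 eigen1, where y = 0]; simp)+
  then show ?thesis using Phi1 Phi2 by simp
qed

theorem lemma2:
  shows "(\<forall>q\<in>H. \<bar>Phi q\<bar> \<le> Linf q) \<and>
         (\<forall>q1\<in>H. \<forall>q2\<in>H. \<bar>Phi q1 - Phi q2\<bar> \<le> Linf (\<lambda>x. q1 x - q2 x))"
  using abs_Phi_le_Linf abs_Phi_diff_le_Linf by blast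

end
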